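(* Let $G$ be a graph, $U\subseteq V(G)$, and let $P$ be a path $v\,v_2\,v_3\,v_4$ on four new vertices (so $P\cong P_4$ and $v$ is an end vertex). Let $H$ be the graph with $V(H)=V(G)\cup V(P)$ and $E(H)=E(G)\cup E(P)\cup\{uv: u\in U\}$. Then $\overline{H}$ is $N$-AW if and only if $\overline{G\cup P_4}$ is $N$-AW (where $G\cup P_4$ is the disjoint union of $G$ and $P$).
   Context: All graphs are finite and simple; $\overline{X}$ denotes the complement. Labels lie in $\mathbb{Z}_\ell$ for a fixed integer $\ell\ge2$. In the neighborhood Lights Out game on a graph, toggling a vertex $w$ adds $1$ (mod $\ell$) to the label of every vertex in the closed neighborhood $N[w]$; the game is won when all labels are $0$. A graph is $N$-AW if this game can be won from every initial labeling. *)

theory Defs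
  imports Main
begin

definition simple_graph :: "'a set \<Rightarrow> ('a \<Rightarrow> 'a \<Rightarrow> bool) \<Rightarrow> bool" where
  "simple_graph V E \<longleftrightarrow> finite V \<and> (\<forall>u w. E u w \<longrightarrow> u \<in> V \<and> w \<in> V \<and> E w u) \<and> (\<forall>u. \<not> E u u)"

definition compl_edges :: "'a set \<Rightarrow> ('a \<Rightarrow> 'a \<Rightarrow> bool) \<Rightarrow> 'a \<Rightarrow> 'a \<Rightarrow> bool" where
  "compl_edges V E u w \<longleftrightarrow> u \<in> V \<and> w \<in> V \<and> u \<noteq> w \<and> \<not> E u w"

definition closed_nbhd :: "'a set \<Rightarrow> ('a \<Rightarrow> 'a \<Rightarrow> bool) \<Rightarrow> 'a \<Rightarrow> 'a set" where
  "closed_nbhd V E w = {u \<in> V. u = w \<or> E w u}"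

text \<open>N-AW over Z_l: from every initial labeling (labels in {0..<l}) there is a
  choice of toggle counts x w (toggling w adds 1 mod l to every vertex of N[w])
  making all labels 0 mod l.\<close>
definition N_AW :: "nat \<Rightarrow> 'a set \<Rightarrow> ('a \<Rightarrow> 'a \<Rightarrow> bool) \<Rightarrow> bool" where
  "N_AW l V E \<longleftrightarrow>
     (\<forall>c :: 'a \<Rightarrow> nat. (\<forall>u\<in>V. c u < l) \<longrightarrow>
        (\<exists>x :: 'a \<Rightarrow> nat. \<forall>u\<in>V.
            (c u + (\<Sum>w\<in>V. if u \<in> closed_nbhd V E w then x w else 0)) mod l = 0))"

text \<open>The path P = v v2 v3 v4 on vertices 1,2,3,4 (v = 1).\<close>
definition P4_verts :: "nat set" where "P4_verts = {1,2,3,4}"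
definition P4_edges :: "nat \<Rightarrow> nat \<Rightarrow> bool" where
  "P4_edges i j \<longleftrightarrow> (i,j) \<in> {(1,2),(2,1),(2,3),(3,2),(3,4),(4,3)}"

definition dunion_verts :: "'a set \<Rightarrow> ('a + nat) set" where
  "dunion_verts V = Inl ` V \<union> Inr ` P4_verts"
definition dunion_edges :: "('a \<Rightarrow> 'a \<Rightarrow> bool) \<Rightarrow> ('a + nat) \<Rightarrow> ('a + nat) \<Rightarrow> bool" where
  "dunion_edges E x y = (case (x, y) of
       (Inl a, Inl b) \<Rightarrow> E a b
     | (Inr i, Inr j) \<Rightarrow> P4_edges i j
     | _ \<Rightarrow> False)"

definition H_edges :: "('a \<Rightarrow> 'a \<Rightarrow> bool) \<Rightarrow> 'a set \<Rightarrow> ('a + nat) \<Rightarrow> ('a + nat) \<Rightarrow> bool" where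
  "H_edges E U x y \<longleftrightarrow> dunion_edges E x y
      \<or> (x = Inr 1 \<and> y \<in> Inl ` U) \<or> (y = Inr 1 \<and> x \<in> Inl ` U)"

end

theory Submission
  imports Defs
begin

(* Winnability over Z_l is surjectivity mod l of the closed-neighbourhood matrix. In the
  complements of both H and the disjoint union of G and P4, the block of that matrix on the four
  path vertices is the closed-neighbourhood matrix of the complement of P4, which is invertible
  over Z; so surjectivity of the whole matrix is equivalent to surjectivity mod l of its Schur
  complement on V. The two graphs differ only in the edges between U and the end vertex v, i.e.
  in the first row and column of the cross blocks. The inverse of the P4 block has entry sum 2,
  while its first row and first column sum to 0 and meet in a 0, so in both cases the Schur
  complement is the closed-neighbourhood matrix of the complement of G minus twice the all-ones
  matrix. *)

lemma sum_mult_sum_swap: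
  fixes f :: "'a \<Rightarrow> 'r::comm_semiring_0"
  shows "(\<Sum>i\<in>A. f i * (\<Sum>j\<in>B. g i j * v j)) = (\<Sum>j\<in>B. (\<Sum>i\<in>A. f i * g i j) * v j)"
  by (simp add: sum_distrib_left sum_distrib_right mult.assoc sum.swap[of _ B])

lemma sum_of_bool_mult_delta:
  assumes "finite Y" "i \<in> Y"
  shows "(\<Sum>j\<in>Y. of_bool (i = j) * (v j :: 'r::semiring_1)) = v i"
proof -
  have "(\<Sum>j\<in>Y. of_bool (i = j) * v j) = (\<Sum>j\<in>Y. if i = j then v j else 0)"
    by (rule sum.cong) simp_all
  then show ?thesis
    using assms by simp
qed

lemma sum_mult_mod_eq:
  fixes m :: "'b::euclidean_semiring_cancel"
  shows "(\<Sum>w\<in>S. f w * (x w mod m)) mod m = (\<Sum>w\<in>S. f w * x w) mod m"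
proof -
  have "(\<Sum>w\<in>S. f w * (x w mod m)) mod m = (\<Sum>w\<in>S. f w * (x w mod m) mod m) mod m"
    by (rule mod_sum_eq[symmetric])
  also have "\<dots> = (\<Sum>w\<in>S. f w * x w mod m) mod m"
    by (simp add: mod_mult_right_eq)
  also have "\<dots> = (\<Sum>w\<in>S. f w * x w) mod m"
    by (rule mod_sum_eq)
  finally show ?thesis .
qed

definition surj_mod :: "'r::comm_ring_1 \<Rightarrow> 'a set \<Rightarrow> ('a \<Rightarrow> 'a \<Rightarrow> 'r) \<Rightarrow> bool"
  where
  "surj_mod m S M \<longleftrightarrow> (\<forall>c. \<exists>x. \<forall>u\<in>S. m dvd c u + (\<Sum>w\<in>S. M u w * x w))"

lemma surj_mod_cong:
  assumes "\<And>u w. u \<in> S \<Longrightarrow> w \<in> S \<Longrightarrow> M u w = M' u w"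
  shows "surj_mod m S M \<longleftrightarrow> surj_mod m S M'"
  unfolding surj_mod_def using assms by (simp cong: sum.cong)

definition schur_compl ::
    "'a set \<Rightarrow> ('a \<Rightarrow> 'a \<Rightarrow> 'r::comm_ring_1) \<Rightarrow> ('a \<Rightarrow> 'a \<Rightarrow> 'r) \<Rightarrow> 'a \<Rightarrow> 'a \<Rightarrow> 'r"
  where
  "schur_compl Y M N u w = M u w - (\<Sum>k\<in>Y. \<Sum>j\<in>Y. M u k * N k j * M j w)"

lemma sum_schur_compl_mult_eq:
  fixes M N :: "'a \<Rightarrow> 'a \<Rightarrow> 'r::comm_ring_1" and x :: "'a \<Rightarrow> 'r"
  assumes fin: "finite X" "finite Y" and disj: "X \<inter> Y = {}"
    and left_inv: "\<And>i j. i \<in> Y \<Longrightarrow> j \<in> Y \<Longrightarrow> (\<Sum>k\<in>Y. N i k * M k j) = of_bool (i = j)"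
  defines "r \<equiv> \<lambda>u. \<Sum>w\<in>X \<union> Y. M u w * x w"
  shows "(\<Sum>a\<in>X. schur_compl Y M N g a * x a) = r g - (\<Sum>k\<in>Y. M g k * (\<Sum>i\<in>Y. N k i * r i))"
proof -
  have r_split: "r u = (\<Sum>a\<in>X. M u a * x a) + (\<Sum>k\<in>Y. M u k * x k)" for u
    unfolding r_def using fin disj by (rule sum.union_disjoint)
  have x_Y: "x k = (\<Sum>i\<in>Y. N k i * r i) - (\<Sum>a\<in>X. (\<Sum>i\<in>Y. N k i * M i a) * x a)"
    if "k \<in> Y" for k
  proof -
    have "(\<Sum>i\<in>Y. N k i * r i)
        = (\<Sum>a\<in>X. (\<Sum>i\<in>Y. N k i * M i a) * x a) + (\<Sum>j\<in>Y. (\<Sum>i\<in>Y. N k i * M i j) * x j)"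
      by (simp add: r_split distrib_left sum.distrib sum_mult_sum_swap)
    also have "(\<Sum>j\<in>Y. (\<Sum>i\<in>Y. N k i * M i j) * x j) = x k"
      using that fin by (simp add: left_inv sum_of_bool_mult_delta cong: sum.cong)
    finally show ?thesis by simp
  qed
  have "(\<Sum>k\<in>Y. M g k * x k) = (\<Sum>k\<in>Y. M g k * (\<Sum>i\<in>Y. N k i * r i))
      - (\<Sum>k\<in>Y. M g k * (\<Sum>a\<in>X. (\<Sum>i\<in>Y. N k i * M i a) * x a))"
    by (simp add: x_Y right_diff_distrib sum_subtractf cong: sum.cong)
  also have "(\<Sum>k\<in>Y. M g k * (\<Sum>a\<in>X. (\<Sum>i\<in>Y. N k i * M i a) * x a))
      = (\<Sum>a\<in>X. (\<Sum>k\<in>Y. \<Sum>i\<in>Y. M g k * N k i * M i a) * x a)"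
    by (subst sum_mult_sum_swap) (simp add: sum_distrib_left mult.assoc)
  finally show ?thesis
    unfolding schur_compl_def r_split[of g] by (simp add: left_diff_distrib sum_subtractf)
qed

lemma sum_schur_compl_mult_eq_back_subst:
  fixes M N :: "'a \<Rightarrow> 'a \<Rightarrow> 'r::comm_ring_1"
  shows "(c u + (\<Sum>a\<in>X. M u a * y a))
      - (\<Sum>j\<in>Y. (\<Sum>k\<in>Y. M u k * N k j) * (c j + (\<Sum>a\<in>X. M j a * y a)))
    = (c u - (\<Sum>j\<in>Y. (\<Sum>k\<in>Y. M u k * N k j) * c j)) + (\<Sum>a\<in>X. schur_compl Y M N u a * y a)"
proof -
  have "(\<Sum>j\<in>Y. (\<Sum>k\<in>Y. M u k * N k j) * M j a) = (\<Sum>k\<in>Y. \<Sum>j\<in>Y. M u k * N k j * M j a)" for a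
    unfolding sum_distrib_right by (rule sum.swap)
  then have "(\<Sum>j\<in>Y. (\<Sum>k\<in>Y. M u k * N k j) * (\<Sum>a\<in>X. M j a * y a))
      = (\<Sum>a\<in>X. (\<Sum>k\<in>Y. \<Sum>j\<in>Y. M u k * N k j * M j a) * y a)"
    by (simp only: sum_mult_sum_swap)
  then show ?thesis
    by (simp add: distrib_left sum.distrib schur_compl_def left_diff_distrib sum_subtractf)
qed

lemma surj_mod_schur_complI:
  fixes M N :: "'a \<Rightarrow> 'a \<Rightarrow> 'r::comm_ring_1"
  assumes fin: "finite X" "finite Y" and disj: "X \<inter> Y = {}"
    and left_inv: "\<And>i j. i \<in> Y \<Longrightarrow> j \<in> Y \<Longrightarrow> (\<Sum>k\<in>Y. N i k * M k j) = of_bool (i = j)"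
    and surj: "surj_mod m (X \<union> Y) M"
  shows "surj_mod m X (schur_compl Y M N)"
  unfolding surj_mod_def
proof
  fix d :: "'a \<Rightarrow> 'r"
  obtain x where x: "\<forall>u\<in>X \<union> Y. m dvd (if u \<in> X then d u else 0) + (\<Sum>w\<in>X \<union> Y. M u w * x w)"
    using spec[OF surj[unfolded surj_mod_def], of "\<lambda>u. if u \<in> X then d u else 0"] by blast
  define r where "r u = (\<Sum>w\<in>X \<union> Y. M u w * x w)" for u
  have r_dvd: "m dvd r i" if "i \<in> Y" for i
  proof -
    have "m dvd (if i \<in> X then d i else 0) + r i"
      using x that unfolding r_def by blast
    moreover have "i \<notin> X"
      using that disj by blast
    ultimately show ?thesis
      by simp
  qed
  have "m dvd d g + (\<Sum>a\<in>X. schur_compl Y M N g a * x a)" if "g \<in> X" for g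
  proof -
    have "m dvd d g + r g"
      using bspec[OF x, of g] that unfolding r_def by simp
    moreover have "m dvd (\<Sum>k\<in>Y. M g k * (\<Sum>i\<in>Y. N k i * r i))"
      by (intro dvd_sum dvd_mult r_dvd)
    ultimately have "m dvd (d g + r g) - (\<Sum>k\<in>Y. M g k * (\<Sum>i\<in>Y. N k i * r i))"
      by (rule dvd_diff)
    also have "(d g + r g) - (\<Sum>k\<in>Y. M g k * (\<Sum>i\<in>Y. N k i * r i))
        = d g + (\<Sum>a\<in>X. schur_compl Y M N g a * x a)"
      using sum_schur_compl_mult_eq[OF fin disj left_inv, where x = x and g = g] unfolding r_def by simp
    finally show ?thesis .
  qed
  then show "\<exists>x. \<forall>g\<in>X. m dvd d g + (\<Sum>a\<in>X. schur_compl Y M N g a * x a)"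
    by blast
qed

lemma surj_mod_UnI:
  fixes M N :: "'a \<Rightarrow> 'a \<Rightarrow> 'r::comm_ring_1"
  assumes fin: "finite X" "finite Y" and disj: "X \<inter> Y = {}"
    and right_inv: "\<And>i j. i \<in> Y \<Longrightarrow> j \<in> Y \<Longrightarrow> (\<Sum>k\<in>Y. M i k * N k j) = of_bool (i = j)"
    and surj: "surj_mod m X (schur_compl Y M N)"
  shows "surj_mod m (X \<union> Y) M"
  unfolding surj_mod_def
proof
  fix c :: "'a \<Rightarrow> 'r"
  define MN where "MN u j = (\<Sum>k\<in>Y. M u k * N k j)" for u j
  obtain y where y: "\<forall>g\<in>X. m dvd (c g - (\<Sum>j\<in>Y. MN g j * c j)) + (\<Sum>a\<in>X. schur_compl Y M N g a * y a)"
    using spec[OF surj[unfolded surj_mod_def], of "\<lambda>g. c g - (\<Sum>j\<in>Y. MN g j * c j)"] by blast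
  define s where "s u = c u + (\<Sum>a\<in>X. M u a * y a)" for u
  define x where "x u = (if u \<in> X then y u else - (\<Sum>j\<in>Y. N u j * s j))" for u
  have row: "c u + (\<Sum>w\<in>X \<union> Y. M u w * x w) = s u - (\<Sum>j\<in>Y. MN u j * s j)" for u
  proof -
    have "(\<Sum>k\<in>Y. M u k * x k) = - (\<Sum>k\<in>Y. M u k * (\<Sum>j\<in>Y. N k j * s j))"
      unfolding sum_negf[symmetric] using disj by (intro sum.cong) (auto simp: x_def)
    also have "\<dots> = - (\<Sum>j\<in>Y. MN u j * s j)"
      unfolding MN_def by (rule arg_cong[OF sum_mult_sum_swap])
    moreover have "(\<Sum>a\<in>X. M u a * x a) = (\<Sum>a\<in>X. M u a * y a)"
      by (simp add: x_def)
    ultimately show ?thesis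
      using fin disj by (simp add: sum.union_disjoint s_def)
  qed
  have "m dvd c u + (\<Sum>w\<in>X \<union> Y. M u w * x w)" if "u \<in> X \<union> Y" for u
    using that
  proof
    assume "u \<in> X"
    then show ?thesis
      using y unfolding row s_def MN_def sum_schur_compl_mult_eq_back_subst by simp
  next
    assume "u \<in> Y"
    then have "(\<Sum>j\<in>Y. MN u j * s j) = s u"
      using fin by (simp add: MN_def right_inv sum_of_bool_mult_delta cong: sum.cong)
    then show ?thesis
      by (simp add: row)
  qed
  then show "\<exists>x. \<forall>u\<in>X \<union> Y. m dvd c u + (\<Sum>w\<in>X \<union> Y. M u w * x w)"
    by blast
qed

lemma surj_mod_Un_iff_schur_compl:
  fixes M N :: "'a \<Rightarrow> 'a \<Rightarrow> 'r::comm_ring_1"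
  assumes "finite X" "finite Y" "X \<inter> Y = {}"
    and "\<And>i j. i \<in> Y \<Longrightarrow> j \<in> Y \<Longrightarrow> (\<Sum>k\<in>Y. M i k * N k j) = of_bool (i = j)"
    and "\<And>i j. i \<in> Y \<Longrightarrow> j \<in> Y \<Longrightarrow> (\<Sum>k\<in>Y. N i k * M k j) = of_bool (i = j)"
  shows "surj_mod m (X \<union> Y) M \<longleftrightarrow> surj_mod m X (schur_compl Y M N)"
  using surj_mod_schur_complI[of X Y N M m] surj_mod_UnI[of X Y M N m] assms by blast

definition nbhd_matrix :: "'a set \<Rightarrow> ('a \<Rightarrow> 'a \<Rightarrow> bool) \<Rightarrow> 'a \<Rightarrow> 'a \<Rightarrow> int"
  where
  "nbhd_matrix S E u w = of_bool (u \<in> closed_nbhd S E w)"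

lemma of_nat_closed_nbhd_sum:
  "int (\<Sum>w\<in>S. if u \<in> closed_nbhd S E w then x w else 0)
     = (\<Sum>w\<in>S. nbhd_matrix S E u w * int (x w))"
  unfolding of_nat_sum nbhd_matrix_def by (rule sum.cong) simp_all

lemma surj_mod_nbhd_matrix_if_N_AW:
  assumes "l > 0" and win: "N_AW l S E"
  shows "surj_mod (int l) S (nbhd_matrix S E)"
  unfolding surj_mod_def
proof
  fix c :: "'a \<Rightarrow> int"
  have "\<forall>u\<in>S. nat (c u mod int l) < l"
    using assms by (simp add: nat_less_iff)
  then obtain x :: "'a \<Rightarrow> nat" where x: "\<forall>u\<in>S.
      (nat (c u mod int l) + (\<Sum>w\<in>S. if u \<in> closed_nbhd S E w then x w else 0)) mod l = 0"
    using spec[OF win[unfolded N_AW_def], of "\<lambda>u. nat (c u mod int l)"] by blast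
  have "int l dvd c u + (\<Sum>w\<in>S. nbhd_matrix S E u w * int (x w))" if "u \<in> S" for u
  proof -
    have "int l dvd int (nat (c u mod int l) + (\<Sum>w\<in>S. if u \<in> closed_nbhd S E w then x w else 0))"
      unfolding int_dvd_int_iff using x that by (simp add: dvd_eq_mod_eq_0)
    then have "int l dvd c u mod int l + (\<Sum>w\<in>S. nbhd_matrix S E u w * int (x w))"
      using assms by (simp only: of_nat_add of_nat_closed_nbhd_sum) simp
    then show ?thesis
      by (simp add: dvd_eq_mod_eq_0 mod_add_left_eq)
  qed
  then show "\<exists>x. \<forall>u\<in>S. int l dvd c u + (\<Sum>w\<in>S. nbhd_matrix S E u w * x w)"
    by (intro exI[of _ "\<lambda>w. int (x w)"]) blast
qed

lemma N_AW_if_surj_mod_nbhd_matrix: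
  assumes "l > 0" and surj: "surj_mod (int l) S (nbhd_matrix S E)"
  shows "N_AW l S E"
  unfolding N_AW_def
proof (intro allI impI)
  fix c :: "'a \<Rightarrow> nat"
  obtain x where x: "\<forall>u\<in>S. int l dvd int (c u) + (\<Sum>w\<in>S. nbhd_matrix S E u w * x w)"
    using spec[OF surj[unfolded surj_mod_def], of "\<lambda>u. int (c u)"] by blast
  have "(c u + (\<Sum>w\<in>S. if u \<in> closed_nbhd S E w then nat (x w mod int l) else 0)) mod l = 0"
    if "u \<in> S" for u
  proof -
    have "(int (c u) + (\<Sum>w\<in>S. nbhd_matrix S E u w * (x w mod int l))) mod int l
        = (int (c u) + (\<Sum>w\<in>S. nbhd_matrix S E u w * x w)) mod int l"
      by (subst mod_add_right_eq[symmetric]) (simp only: sum_mult_mod_eq mod_add_right_eq)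
    then have "int l dvd int (c u) + (\<Sum>w\<in>S. nbhd_matrix S E u w * (x w mod int l))"
      using x that by (simp add: dvd_eq_mod_eq_0)
    moreover have "int (c u + (\<Sum>w\<in>S. if u \<in> closed_nbhd S E w then nat (x w mod int l) else 0))
        = int (c u) + (\<Sum>w\<in>S. nbhd_matrix S E u w * (x w mod int l))"
      using assms by (simp only: of_nat_add of_nat_closed_nbhd_sum) simp
    ultimately show ?thesis
      by (simp flip: int_dvd_int_iff dvd_eq_mod_eq_0)
  qed
  then show "\<exists>x. \<forall>u\<in>S. (c u + (\<Sum>w\<in>S. if u \<in> closed_nbhd S E w then x w else 0)) mod l = 0"
    by (intro exI[of _ "\<lambda>w. nat (x w mod int l)"]) blast
qed

lemma N_AW_iff_surj_mod:
  assumes "l > 0"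
  shows "N_AW l S E \<longleftrightarrow> surj_mod (int l) S (nbhd_matrix S E)"
  using assms surj_mod_nbhd_matrix_if_N_AW N_AW_if_surj_mod_nbhd_matrix by blast

lemma nbhd_matrix_compl_edges:
  "u \<in> S \<Longrightarrow> w \<in> S \<Longrightarrow> nbhd_matrix S (compl_edges S E) u w = of_bool (u = w \<or> \<not> E w u)"
  by (auto simp: nbhd_matrix_def closed_nbhd_def compl_edges_def)

lemma finite_P4_verts: "finite P4_verts"
  by (simp add: P4_verts_def)

definition P4_compl_inv :: "nat \<Rightarrow> nat \<Rightarrow> int" where
  "P4_compl_inv i j = [[0, -1, 0, 1], [-1, 1, 1, 0], [0, 1, 1, -1], [1, 0, -1, 0]] ! (i - 1) ! (j - 1)"

lemma P4_compl_inv_right_inverse: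
  assumes "i \<in> P4_verts" "j \<in> P4_verts"
  shows "(\<Sum>k\<in>P4_verts. nbhd_matrix P4_verts (compl_edges P4_verts P4_edges) i k * P4_compl_inv k j)
    = of_bool (i = j)"
  using assms by (auto simp: P4_verts_def P4_edges_def P4_compl_inv_def nbhd_matrix_compl_edges)

lemma P4_compl_inv_left_inverse:
  assumes "i \<in> P4_verts" "j \<in> P4_verts"
  shows "(\<Sum>k\<in>P4_verts. P4_compl_inv i k * nbhd_matrix P4_verts (compl_edges P4_verts P4_edges) k j)
    = of_bool (i = j)"
  using assms by (auto simp: P4_verts_def P4_edges_def P4_compl_inv_def nbhd_matrix_compl_edges)

lemma P4_compl_inv_sum:
  "(\<Sum>k\<in>P4_verts. \<Sum>j\<in>P4_verts. of_bool (k \<noteq> 1 \<or> p) * P4_compl_inv k j * of_bool (j \<noteq> 1 \<or> q)) = 2"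
  by (cases p; cases q) (simp_all add: P4_verts_def P4_compl_inv_def)

lemma sum_image_Inr: "(\<Sum>k\<in>Inr ` A. f k) = (\<Sum>k\<in>A. f (Inr k))"
  by (simp add: sum.reindex)

lemma schur_compl_compl_attach_P4:
  fixes EE :: "'a + nat \<Rightarrow> 'a + nat \<Rightarrow> bool"
  assumes end_only: "\<And>g k. EE (Inr k) (Inl g) \<Longrightarrow> k = 1" "\<And>a j. EE (Inl a) (Inr j) \<Longrightarrow> j = 1"
    and "g \<in> V" "a \<in> V"
  defines "M \<equiv> nbhd_matrix (dunion_verts V) (compl_edges (dunion_verts V) EE)"
  shows "schur_compl (Inr ` P4_verts) M (\<lambda>u w. P4_compl_inv (projr u) (projr w)) (Inl g) (Inl a)
    = of_bool (g = a \<or> \<not> EE (Inl a) (Inl g)) - 2"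
proof -
  have Inl_mem: "Inl g \<in> dunion_verts V" "Inl a \<in> dunion_verts V"
    using \<open>g \<in> V\<close> \<open>a \<in> V\<close> by (simp_all add: dunion_verts_def)
  have Inr_mem: "Inr k \<in> dunion_verts V" if "k \<in> P4_verts" for k
    using that by (simp add: dunion_verts_def)
  have M_Inl_Inr: "M (Inl g) (Inr k) = of_bool (k \<noteq> 1 \<or> \<not> EE (Inr 1) (Inl g))"
    if "k \<in> P4_verts" for k
  proof -
    have "EE (Inr k) (Inl g) \<longleftrightarrow> k = 1 \<and> EE (Inr 1) (Inl g)"
      using end_only(1) by blast
    then show ?thesis
      using Inl_mem Inr_mem[OF that] by (simp add: M_def nbhd_matrix_compl_edges)
  qed
  have M_Inr_Inl: "M (Inr j) (Inl a) = of_bool (j \<noteq> 1 \<or> \<not> EE (Inl a) (Inr 1))"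
    if "j \<in> P4_verts" for j
  proof -
    have "EE (Inl a) (Inr j) \<longleftrightarrow> j = 1 \<and> EE (Inl a) (Inr 1)"
      using end_only(2) by blast
    then show ?thesis
      using Inl_mem Inr_mem[OF that] by (simp add: M_def nbhd_matrix_compl_edges)
  qed
  have "(\<Sum>k\<in>P4_verts. \<Sum>j\<in>P4_verts. M (Inl g) (Inr k) * P4_compl_inv k j * M (Inr j) (Inl a)) = 2"
    by (simp only: M_Inl_Inr M_Inr_Inl P4_compl_inv_sum cong: sum.cong)
  moreover have "M (Inl g) (Inl a) = of_bool (g = a \<or> \<not> EE (Inl a) (Inl g))"
    using Inl_mem by (simp add: M_def nbhd_matrix_compl_edges)
  ultimately show ?thesis
    by (simp add: schur_compl_def sum_image_Inr)
qed

lemma surj_mod_compl_attach_P4: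
  fixes EE :: "'a + nat \<Rightarrow> 'a + nat \<Rightarrow> bool"
  assumes "finite V"
    and P4: "\<And>i j. EE (Inr i) (Inr j) \<longleftrightarrow> P4_edges i j"
    and end_only: "\<And>g k. EE (Inr k) (Inl g) \<Longrightarrow> k = 1" "\<And>a j. EE (Inl a) (Inr j) \<Longrightarrow> j = 1"
  shows "surj_mod m (dunion_verts V) (nbhd_matrix (dunion_verts V) (compl_edges (dunion_verts V) EE))
    \<longleftrightarrow> surj_mod m (Inl ` V) (\<lambda>u w. of_bool (u = w \<or> \<not> EE w u) - 2)"
proof -
  define M where "M = nbhd_matrix (dunion_verts V) (compl_edges (dunion_verts V) EE)"
  define N where "N u w = P4_compl_inv (projr u) (projr w)" for u w :: "'a + nat"
  have T: "dunion_verts V = Inl ` V \<union> Inr ` P4_verts"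
    by (simp add: dunion_verts_def)
  have M_Inr_Inr: "M (Inr i) (Inr j) = nbhd_matrix P4_verts (compl_edges P4_verts P4_edges) i j"
    if "i \<in> P4_verts" "j \<in> P4_verts" for i j
    using that by (simp add: M_def T nbhd_matrix_compl_edges P4)
  have "surj_mod m (dunion_verts V) M \<longleftrightarrow> surj_mod m (Inl ` V) (schur_compl (Inr ` P4_verts) M N)"
    unfolding T using \<open>finite V\<close> finite_P4_verts
    by (intro surj_mod_Un_iff_schur_compl)
      (auto simp: sum_image_Inr M_Inr_Inr N_def P4_compl_inv_right_inverse P4_compl_inv_left_inverse
        cong: sum.cong)
  also have "\<dots> \<longleftrightarrow> surj_mod m (Inl ` V) (\<lambda>u w. of_bool (u = w \<or> \<not> EE w u) - 2)"
  proof (rule surj_mod_cong)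
    fix u w :: "'a + nat"
    assume "u \<in> Inl ` V" "w \<in> Inl ` V"
    then obtain g a where "u = Inl g" "w = Inl a" "g \<in> V" "a \<in> V"
      by blast
    then show "schur_compl (Inr ` P4_verts) M N u w = of_bool (u = w \<or> \<not> EE w u) - 2"
      using schur_compl_compl_attach_P4[OF end_only, where g = g and a = a and V = V]
      unfolding M_def N_def by simp
  qed
  finally show ?thesis
    unfolding M_def .
qed

theorem theorem3p1:
  fixes l :: nat and V U :: "'a set" and E :: "'a \<Rightarrow> 'a \<Rightarrow> bool"
  assumes "l \<ge> 2"
    and "simple_graph V E"
    and "U \<subseteq> V"
  shows "N_AW l (dunion_verts V) (compl_edges (dunion_verts V) (H_edges E U))
     \<longleftrightarrow> N_AW l (dunion_verts V) (compl_edges (dunion_verts V) (dunion_edges E))"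
proof -
  have "finite V"
    using assms(2) by (simp add: simple_graph_def)
  have "l > 0"
    using assms(1) by simp
  let ?T = "dunion_verts V"
  have "N_AW l ?T (compl_edges ?T (H_edges E U))
      \<longleftrightarrow> surj_mod (int l) (Inl ` V) (\<lambda>u w. of_bool (u = w \<or> \<not> H_edges E U w u) - 2)"
    unfolding N_AW_iff_surj_mod[OF \<open>l > 0\<close>] using \<open>finite V\<close>
    by (rule surj_mod_compl_attach_P4) (auto simp: H_edges_def dunion_edges_def)
  also have "\<dots> \<longleftrightarrow> surj_mod (int l) (Inl ` V) (\<lambda>u w. of_bool (u = w \<or> \<not> dunion_edges E w u) - 2)"
    by (rule surj_mod_cong) (auto simp: H_edges_def)
  also have "\<dots> \<longleftrightarrow> N_AW l ?T (compl_edges ?T (dunion_edges E))"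
    unfolding N_AW_iff_surj_mod[OF \<open>l > 0\<close>] using \<open>finite V\<close>
    by (rule surj_mod_compl_attach_P4[symmetric]) (auto simp: dunion_edges_def)
  finally show ?thesis .
qed

end
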